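(* Let $k\in\mathbb{Z}_{\geqslant 2}$. Then for all $n\in\mathbb{Z}_{\geqslant 1}$ and all $0<\varepsilon\leqslant\frac{k-1}{6}$, $$\tau_k(n)\leqslant \min\left(k^{\Omega(n)},\ \left(\tfrac{3(k-1)}{5\varepsilon}\right)^{k^{1/\varepsilon}(k-1)} n^{\varepsilon}\right).$$
   Context: $\tau_k(n)$ is the number of ordered $k$-tuples of positive integers with product $n$; $\Omega(n)$ is the number of prime factors of $n$ counted with multiplicity. *)

theory Defs
  imports "HOL-Analysis.Analysis" "HOL-Computational_Algebra.Primes"
begin

definition divisor_tau :: "nat \<Rightarrow> nat \<Rightarrow> nat" where
  "divisor_tau k n = card {xs :: nat list. length xs = k \<and> (\<forall>x\<in>set xs. x > 0) \<and> prod_list xs = n}"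

definition bigOmega :: "nat \<Rightarrow> nat" where
  "bigOmega n = size (prime_factorization n)"

end

theory Submission
  imports Defs
begin

text \<open>\<open>\<tau>\<^sub>k\<close> is submultiplicative on coprime arguments (split every entry of a
  factorization of \<open>m1 m2\<close> into its \<open>m1\<close>- and \<open>m2\<close>-part), so it suffices to bound
  \<open>\<tau>\<^sub>k(p\<^sup>a)\<close>. For \<open>p \<ge> k\<^bsup>1/\<epsilon>\<^esup>\<close> we have \<open>\<tau>\<^sub>k(p\<^sup>a) \<le> k\<^sup>a \<le> p\<^bsup>a\<epsilon>\<^esup>\<close>. For smaller
  \<open>p\<close> we use \<open>\<tau>\<^sub>k(p\<^sup>a) \<le> (a + 1)\<^bsup>k-1\<^esup>\<close> together with the elementary inequality
  \<open>a + 1 \<le> B\<^sup>w p\<^bsup>a\<epsilon>/(k-1)\<^esup>\<close>, where \<open>B = 3(k-1)/(5\<epsilon>)\<close>, \<open>w = 2\<close> for \<open>p = 2\<close> and \<open>w = 1\<close> for odd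
  \<open>p\<close>; the weights \<open>w\<close> of the primes below \<open>k\<^bsup>1/\<epsilon>\<^esup>\<close> add up to at most \<open>k\<^bsup>1/\<epsilon>\<^esup>\<close>.
  The bound \<open>k\<^bsup>\<Omega>(n)\<^esup>\<close> follows from \<open>\<tau>\<^sub>k(p m) \<le> k \<tau>\<^sub>k(m)\<close>: a prime factor \<open>p\<close> divides one
  of the \<open>k\<close> entries, and dividing that entry by \<open>p\<close> leaves a factorization of \<open>m\<close>.\<close>

definition ordered_factorizations :: "nat \<Rightarrow> nat \<Rightarrow> nat list set" where
  "ordered_factorizations k n = {xs. length xs = k \<and> (\<forall>x\<in>set xs. x > 0) \<and> prod_list xs = n}"

lemma divisor_tau_eq_card: "divisor_tau k n = card (ordered_factorizations k n)"
  by (simp add: divisor_tau_def ordered_factorizations_def)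

lemma ordered_factorizations_0 [simp]: "ordered_factorizations k 0 = {}"
  by (auto simp: ordered_factorizations_def prod_list_zero_iff)

lemma ordered_factorizations_1: "ordered_factorizations k 1 = {replicate k 1}"
proof -
  have "xs = replicate k 1" if "length xs = k" "prod_list xs = 1" for xs :: "nat list"
    using that by (metis prod_list_dvd nat_dvd_1_iff_1 replicate_eqI)
  then show ?thesis
    by (auto simp: ordered_factorizations_def)
qed

lemma finite_ordered_factorizations [simp]: "finite (ordered_factorizations k n)"
proof (cases "n = 0")
  case False
  have "ordered_factorizations k n \<subseteq> {xs. set xs \<subseteq> {..n} \<and> length xs = k}"
    using False by (auto simp: ordered_factorizations_def dest!: prod_list_dvd dvd_imp_le)
  then show ?thesis
    by (rule finite_subset) (simp add: finite_lists_length_eq)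
qed simp

lemma divisor_tau_0 [simp]: "divisor_tau k 0 = 0"
  by (simp add: divisor_tau_eq_card)

lemma divisor_tau_1: "divisor_tau k 1 = 1"
  unfolding divisor_tau_eq_card ordered_factorizations_1 by simp

lemma prod_list_update_mult:
  fixes xs :: "'a::comm_monoid_mult list"
  assumes "i < length xs"
  shows "prod_list (xs[i := c * xs ! i]) = c * prod_list xs"
  using assms by (induction xs arbitrary: i) (auto simp: ac_simps split: nat.split)

lemma prime_dvd_prod_list_iff:
  fixes p :: "'a::factorial_semiring_multiplicative"
  assumes "prime p"
  shows "p dvd prod_list xs \<longleftrightarrow> (\<exists>x\<in>set xs. p dvd x)"
  using prime_dvd_prod_mset_iff[OF assms, of "mset xs"] by (auto simp: prod_mset_prod_list)

lemma ordered_factorizations_prime_mult_subset: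
  assumes p: "prime p"
  shows "ordered_factorizations k (p * m)
           \<subseteq> (\<lambda>(i, ys). ys[i := p * ys ! i]) ` ({..<k} \<times> ordered_factorizations k m)"
proof
  fix xs assume xs: "xs \<in> ordered_factorizations k (p * m)"
  then have "p dvd prod_list xs"
    by (simp add: ordered_factorizations_def)
  then obtain i where i: "i < length xs" "p dvd xs ! i"
    using p by (auto simp: prime_dvd_prod_list_iff in_set_conv_nth)
  define ys where "ys = xs[i := xs ! i div p]"
  have xs_eq: "xs = ys[i := p * ys ! i]"
    using i by (simp add: ys_def dvd_mult_div_cancel)
  have "i < length ys"
    using i by (simp add: ys_def)
  then have "prod_list xs = p * prod_list ys"
    by (subst xs_eq) (rule prod_list_update_mult)
  then have "prod_list ys = m"
    using xs p by (simp add: ordered_factorizations_def prime_gt_0_nat)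
  moreover have "\<forall>y\<in>set ys. y > 0"
  proof -
    have "xs ! i > 0"
      using xs i(1) by (auto simp: ordered_factorizations_def)
    then have "xs ! i div p > 0"
      using i(2) by (metis dvd_div_eq_0_iff neq0_conv)
    then show ?thesis
      using xs by (auto simp: ys_def ordered_factorizations_def dest!: set_update_subset_insert[THEN subsetD])
  qed
  ultimately have "ys \<in> ordered_factorizations k m"
    using xs by (simp add: ys_def ordered_factorizations_def)
  then show "xs \<in> (\<lambda>(i, ys). ys[i := p * ys ! i]) ` ({..<k} \<times> ordered_factorizations k m)"
    using xs_eq i xs by (auto simp: ordered_factorizations_def intro!: image_eqI[of _ _ "(i, ys)"])
qed

lemma divisor_tau_prime_mult_le:
  assumes "prime p"
  shows "divisor_tau k (p * m) \<le> k * divisor_tau k m"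
proof -
  have "divisor_tau k (p * m) \<le> card ({..<k} \<times> ordered_factorizations k m)"
    unfolding divisor_tau_eq_card
    by (rule surj_card_le[OF _ ordered_factorizations_prime_mult_subset[OF assms]]) simp
  then show ?thesis
    by (simp add: divisor_tau_eq_card card_cartesian_product)
qed

lemma divisor_tau_le_power_bigOmega: "divisor_tau k n \<le> k ^ bigOmega n"
proof (induction n rule: less_induct)
  case (less n)
  consider "n = 0" | "n = 1" | "n > 1"
    by linarith
  then show ?case
  proof cases
    case 2
    then show ?thesis
      by (simp only: divisor_tau_1) (simp add: bigOmega_def)
  next
    case 3
    then obtain p where p: "prime p" "p dvd n"
      using prime_factor_nat[of n] by auto
    then obtain m where n: "n = p * m"
      by (elim dvdE)
    have "0 < m"
      using 3 n by (cases m) simp_all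
    then have "m < n"
      using n prime_gt_1_nat[OF p(1)] by (simp add: n_less_m_mult_n)
    have "bigOmega n = Suc (bigOmega m)"
      using n p(1) \<open>0 < m\<close>
      by (simp add: bigOmega_def prime_factorization_mult prime_factorization_prime prime_gt_0_nat)
    then show ?thesis
      using divisor_tau_prime_mult_le[OF p(1), of k m] less.IH[OF \<open>m < n\<close>] n
      by (auto intro: order.trans)
  qed simp
qed

lemma coprime_dvd_mult_gcd_split:
  fixes x m1 m2 :: nat
  assumes "coprime m1 m2" "x dvd m1 * m2"
  shows "gcd x m1 * gcd x m2 = x"
proof (rule dvd_antisym)
  have "coprime (gcd x m1) (gcd x m2)"
    using assms(1) by (rule coprime_imp_coprime) (meson dvd_trans gcd_dvd2 gcd_dvd1)+
  then show "gcd x m1 * gcd x m2 dvd x"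
    by (simp add: divides_mult)
  obtain d1 d2 where "x = d1 * d2" "d1 dvd m1" "d2 dvd m2"
    using dvd_productE[OF assms(2)] by blast
  then show "x dvd gcd x m1 * gcd x m2"
    by (simp add: mult_dvd_mono)
qed

text \<open>The \<open>m1\<close>-parts of the entries multiply to a divisor of \<open>m1\<close> and the \<open>m2\<close>-parts to a
  divisor of \<open>m2\<close>; since together they multiply to \<open>m1 * m2\<close>, both divisors are the full ones.\<close>
lemma prod_list_map_gcd_eq:
  fixes xs :: "nat list"
  assumes cop: "coprime m1 m2" and prod: "prod_list xs = m1 * m2" and pos: "m1 * m2 \<noteq> 0"
  shows "prod_list (map (\<lambda>x. gcd x m1) xs) = m1"
proof -
  define A where "A = prod_list (map (\<lambda>x. gcd x m1) xs)"
  define B where "B = prod_list (map (\<lambda>x. gcd x m2) xs)"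
  have "A * B = prod_list (map (\<lambda>x. gcd x m1 * gcd x m2) xs)"
    unfolding A_def B_def by (induction xs) auto
  also have "\<dots> = prod_list xs"
    using coprime_dvd_mult_gcd_split[OF cop] prod_list_dvd[of _ xs] prod by (simp add: map_idI)
  finally have AB: "A * B = m1 * m2"
    using prod by simp
  have "coprime A m2"
    unfolding A_def using cop by (auto intro!: prod_list_coprime_left intro: coprime_divisors[OF gcd_dvd2 dvd_refl])
  then have "A dvd m1"
    using AB by (metis coprime_dvd_mult_left_iff dvd_triv_left)
  have "coprime m2 m1"
    using cop by (simp add: coprime_commute)
  then have "coprime B m1"
    unfolding B_def by (auto intro!: prod_list_coprime_left intro: coprime_divisors[OF gcd_dvd2 dvd_refl])
  then have "B dvd m2"
    using AB by (metis coprime_dvd_mult_left_iff dvd_triv_right mult.commute)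
  have "A \<le> m1" "B \<le> m2"
    using \<open>A dvd m1\<close> \<open>B dvd m2\<close> pos by (simp_all add: dvd_imp_le)
  have "A = m1"
  proof (rule ccontr)
    assume "A \<noteq> m1"
    with \<open>A \<le> m1\<close> have "A * m2 < m1 * m2"
      using pos by simp
    moreover have "A * B \<le> A * m2"
      using \<open>B \<le> m2\<close> by simp
    ultimately show False
      using AB by linarith
  qed
  then show ?thesis
    by (simp add: A_def)
qed

lemma ordered_factorizations_coprime_mult_subset:
  assumes "coprime m1 m2"
  shows "ordered_factorizations k (m1 * m2)
           \<subseteq> (\<lambda>(ys, zs). map2 (*) ys zs) ` (ordered_factorizations k m1 \<times> ordered_factorizations k m2)"
proof
  fix xs assume xs: "xs \<in> ordered_factorizations k (m1 * m2)"
  then have prod: "prod_list xs = m1 * m2"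
    by (simp add: ordered_factorizations_def)
  have pos: "m1 * m2 \<noteq> 0"
    using xs by (metis empty_iff ordered_factorizations_0)
  define ys where "ys = map (\<lambda>x. gcd x m1) xs"
  define zs where "zs = map (\<lambda>x. gcd x m2) xs"
  have "prod_list ys = m1"
    unfolding ys_def using assms prod pos by (rule prod_list_map_gcd_eq)
  moreover have "prod_list zs = m2"
    unfolding zs_def using prod_list_map_gcd_eq[of m2 m1 xs] assms prod pos
    by (metis coprime_commute mult.commute)
  moreover have "m1 > 0" "m2 > 0"
    using pos by auto
  ultimately have "ys \<in> ordered_factorizations k m1" "zs \<in> ordered_factorizations k m2"
    using xs by (auto simp: ordered_factorizations_def ys_def zs_def)
  moreover have "xs = map2 (*) ys zs"
    using coprime_dvd_mult_gcd_split[OF assms] prod_list_dvd[of _ xs] prod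
    by (simp add: ys_def zs_def map2_map_map map_idI)
  ultimately show "xs \<in> (\<lambda>(ys, zs). map2 (*) ys zs) ` (ordered_factorizations k m1 \<times> ordered_factorizations k m2)"
    by auto
qed

lemma divisor_tau_coprime_mult_le:
  assumes "coprime m1 m2"
  shows "divisor_tau k (m1 * m2) \<le> divisor_tau k m1 * divisor_tau k m2"
proof -
  have "divisor_tau k (m1 * m2) \<le> card (ordered_factorizations k m1 \<times> ordered_factorizations k m2)"
    unfolding divisor_tau_eq_card
    by (rule surj_card_le[OF _ ordered_factorizations_coprime_mult_subset[OF assms]]) simp
  then show ?thesis
    by (simp add: divisor_tau_eq_card card_cartesian_product)
qed

lemma ordered_factorizations_subset_snoc:
  assumes "k > 0"
  shows "ordered_factorizations k n
           \<subseteq> (\<lambda>ys. ys @ [n div prod_list ys]) ` {ys. set ys \<subseteq> {d. d dvd n} \<and> length ys = k - 1}"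
proof
  fix xs assume xs: "xs \<in> ordered_factorizations k n"
  then have "xs \<noteq> []" and prod: "prod_list xs = n"
    using assms by (auto simp: ordered_factorizations_def)
  have "0 \<notin> set (butlast xs)"
    using xs by (auto simp: ordered_factorizations_def dest: in_set_butlastD)
  then have "prod_list (butlast xs) \<noteq> 0"
    by (simp add: prod_list_zero_iff)
  moreover have "prod_list (butlast xs) * last xs = n"
    using \<open>xs \<noteq> []\<close> prod by (metis append_butlast_last_id prod_list.Cons prod_list.Nil
        prod_list.append mult_1_right)
  ultimately have "n div prod_list (butlast xs) = last xs"
    by (metis nonzero_mult_div_cancel_left)
  then have "xs = butlast xs @ [n div prod_list (butlast xs)]"
    using \<open>xs \<noteq> []\<close> by simp
  moreover have "set (butlast xs) \<subseteq> {d. d dvd n}"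
    using prod by (auto dest: in_set_butlastD prod_list_dvd)
  ultimately show "xs \<in> (\<lambda>ys. ys @ [n div prod_list ys]) ` {ys. set ys \<subseteq> {d. d dvd n} \<and> length ys = k - 1}"
    using xs by (auto simp: ordered_factorizations_def)
qed

lemma divisor_tau_le_card_divisors_power: "divisor_tau k n \<le> card {d. d dvd n} ^ (k - 1)"
proof -
  consider "n = 0" | "k = 0" | "n > 0" "k > 0"
    by blast
  then show ?thesis
  proof cases
    case 2
    then show ?thesis
      by (auto simp: divisor_tau_def card_le_Suc0_iff_eq)
  next
    case 3
    then have "divisor_tau k n \<le> card {ys. set ys \<subseteq> {d. d dvd n} \<and> length ys = k - 1}"
      unfolding divisor_tau_eq_card
      by (intro surj_card_le[OF _ ordered_factorizations_subset_snoc]) (simp_all add: finite_lists_length_eq)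
    then show ?thesis
      using 3 by (simp add: card_lists_length_eq)
  qed simp
qed

lemma divisor_tau_prime_power_le:
  assumes "prime p"
  shows "divisor_tau k (p ^ a) \<le> Suc a ^ (k - 1)"
proof -
  have "{d. d dvd p ^ a} = (\<lambda>i. p ^ i) ` {..a}"
    using assms by (auto simp: divides_primepow_nat)
  then have "card {d. d dvd p ^ a} \<le> Suc a"
    using card_image_le[of "{..a}" "\<lambda>i. p ^ i"] by simp
  then show ?thesis
    using divisor_tau_le_card_divisors_power[of k "p ^ a"] by (meson power_mono le0 order.trans)
qed

lemma power_powr_eq_powr_power:
  fixes x :: real
  assumes "0 < x"
  shows "(x ^ n) powr e = (x powr e) ^ n"
proof -
  have "(x ^ n) powr e = (x powr real n) powr e"
    using assms by (simp add: powr_realpow)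
  also have "\<dots> = (x powr e) ^ n"
    using assms by (simp add: powr_powr powr_power)
  finally show ?thesis .
qed

lemma add_one_le_two_powr:
  fixes u a :: real
  assumes u: "6 \<le> u" and a: "0 \<le> a"
  shows "a + 1 \<le> (3 * u / 5) ^ 2 * 2 powr (a / u)"
proof -
  have t: "0 \<le> a / u"
    using u a by simp
  have "1 + 2 / 3 * (a / u) \<le> 1 + ln 2 * (a / u)"
    using mult_right_mono[OF ln2_ge_two_thirds t] by simp
  also have "\<dots> \<le> 2 powr (a / u)"
    using exp_ge_add_one_self[of "a / u * ln 2"] by (simp add: powr_def mult.commute)
  finally have exp_bound: "1 + 2 / 3 * (a / u) \<le> 2 powr (a / u)" .
  have "36 \<le> u * u" and "6 * a \<le> u * a"
    using mult_mono[OF u u] mult_right_mono[OF u a] u by simp_all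
  then have "a + 1 \<le> (9 * u * u + 6 * u * a) / 25"
    using a by simp
  also have "\<dots> = (3 * u / 5) ^ 2 * (1 + 2 / 3 * (a / u))"
    using u by (simp add: field_simps power2_eq_square)
  also have "\<dots> \<le> (3 * u / 5) ^ 2 * 2 powr (a / u)"
    using exp_bound by (rule mult_left_mono) simp
  finally show ?thesis .
qed

lemma add_one_le_three_powr:
  fixes u a :: real
  assumes u: "6 \<le> u" and a: "0 \<le> a"
  shows "a + 1 \<le> 3 * u / 5 * 3 powr (a / u)"
proof -
  have t: "0 \<le> a / u"
    using u a by simp
  have "(1 + a / u / 2) ^ 2 \<le> exp (a / u / 2) ^ 2"
    using exp_ge_add_one_self[of "a / u / 2"] t by (intro power_mono) auto
  also have "\<dots> = exp (a / u)"
    by (simp flip: exp_of_nat_mult)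
  also have "\<dots> \<le> exp (a / u * ln 3)"
    using mult_left_mono[OF _ t, of 1 "ln 3"] by (simp add: ln_ge_iff exp_le)
  finally have exp_bound: "(1 + a / u / 2) ^ 2 \<le> 3 powr (a / u)"
    by (simp add: powr_def mult.commute)
  have "3 * (2 * u + a) ^ 2 - 20 * u * (a + 1) = 3 * (a - 4 * u / 3) ^ 2 + 20 * u * (u / 3 - 1)"
    by (simp add: field_simps power2_eq_square)
  also have "\<dots> \<ge> 0"
    using u by simp
  finally have "a + 1 \<le> 3 * (2 * u + a) ^ 2 / (20 * u)"
    using u by (simp add: le_divide_eq mult.commute)
  also have "\<dots> = 3 * u / 5 * (1 + a / u / 2) ^ 2"
    using u by (simp add: field_simps power2_eq_square)
  also have "\<dots> \<le> 3 * u / 5 * 3 powr (a / u)"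
    using exp_bound u by (intro mult_left_mono) auto
  finally show ?thesis .
qed

lemma divisor_tau_prime_power_le_powr:
  assumes p: "prime p" and k: "real k \<le> real p powr \<epsilon>"
  shows "real (divisor_tau k (p ^ a)) \<le> real (p ^ a) powr \<epsilon>"
proof -
  have "divisor_tau k (p ^ a) \<le> k ^ a"
    using divisor_tau_le_power_bigOmega[of k "p ^ a"] p
    by (simp add: bigOmega_def prime_factorization_prime_power)
  then have "real (divisor_tau k (p ^ a)) \<le> real k ^ a"
    by (metis of_nat_le_iff of_nat_power)
  also have "\<dots> \<le> (real p powr \<epsilon>) ^ a"
    using k by (intro power_mono) auto
  also have "\<dots> = real (p ^ a) powr \<epsilon>"
    using p by (simp add: power_powr_eq_powr_power prime_gt_0_nat)
  finally show ?thesis .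
qed

lemma add_one_le_prime_powr:
  fixes u a :: real
  assumes p: "prime p" and u: "6 \<le> u" and a: "0 \<le> a"
  shows "a + 1 \<le> (3 * u / 5) ^ (if p = 2 then 2 else 1) * real p powr (a / u)"
proof (cases "p = 2")
  case False
  then have "3 \<le> p"
    using prime_ge_2_nat[OF p] by linarith
  have "a + 1 \<le> 3 * u / 5 * 3 powr (a / u)"
    using u a by (rule add_one_le_three_powr)
  also have "\<dots> \<le> 3 * u / 5 * real p powr (a / u)"
    using \<open>3 \<le> p\<close> u a by (intro mult_left_mono powr_mono2) simp_all
  finally show ?thesis
    using False by simp
qed (use add_one_le_two_powr[OF u a] in simp)

lemma divisor_tau_prime_power_le_const_powr:
  assumes p: "prime p" and \<epsilon>: "0 < \<epsilon>" "6 * \<epsilon> \<le> real k - 1"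
  shows "real (divisor_tau k (p ^ a))
           \<le> (3 * (real k - 1) / (5 * \<epsilon>)) ^ ((k - 1) * (if p = 2 then 2 else 1)) * real (p ^ a) powr \<epsilon>"
proof -
  define u where "u = (real k - 1) / \<epsilon>"
  define w :: nat where "w = (if p = 2 then 2 else 1)"
  have u: "6 \<le> u"
    using \<epsilon> by (simp add: u_def field_simps)
  have k: "real (k - 1) = u * \<epsilon>"
    using \<epsilon> by (simp add: u_def of_nat_diff)
  have "real (divisor_tau k (p ^ a)) \<le> (real a + 1) ^ (k - 1)"
    using divisor_tau_prime_power_le[OF p, of k a] by (metis of_nat_le_iff of_nat_power of_nat_Suc add.commute)
  also have "\<dots> \<le> ((3 * u / 5) ^ w * real p powr (real a / u)) ^ (k - 1)"
    using add_one_le_prime_powr[OF p u, of "real a"] by (intro power_mono) (simp_all add: w_def)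
  also have "\<dots> = (3 * u / 5) ^ ((k - 1) * w) * (real p powr (real a / u)) ^ (k - 1)"
    by (metis power_mult_distrib power_mult mult.commute)
  also have "(real p powr (real a / u)) ^ (k - 1) = real (p ^ a) powr \<epsilon>"
  proof -
    have "real (k - 1) * (real a / u) = real a * \<epsilon>"
      using k u by simp
    then show ?thesis
      using p by (simp add: powr_power power_powr_eq_powr_power prime_gt_0_nat)
  qed
  also have "3 * u / 5 = 3 * (real k - 1) / (5 * \<epsilon>)"
    by (simp add: u_def)
  finally show ?thesis
    by (simp only: w_def)
qed

definition prime_weight :: "real \<Rightarrow> nat \<Rightarrow> nat" where
  "prime_weight Y p = (if real p < Y then if p = 2 then 2 else 1 else 0)"

lemma divisor_tau_prime_power_le_prime_weight:
  assumes p: "prime p" and \<epsilon>: "0 < \<epsilon>" "6 * \<epsilon> \<le> real k - 1"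
  shows "real (divisor_tau k (p ^ a))
           \<le> (3 * (real k - 1) / (5 * \<epsilon>)) ^ ((k - 1) * prime_weight (real k powr (1 / \<epsilon>)) p)
             * real (p ^ a) powr \<epsilon>"
proof (cases "real p < real k powr (1 / \<epsilon>)")
  case True
  then have "prime_weight (real k powr (1 / \<epsilon>)) p = (if p = 2 then 2 else 1)"
    by (simp add: prime_weight_def)
  then show ?thesis
    using divisor_tau_prime_power_le_const_powr[OF assms] by (simp only:)
next
  case False
  have "real k = (real k powr (1 / \<epsilon>)) powr \<epsilon>"
    using \<epsilon> by (simp add: powr_powr)
  also have "\<dots> \<le> real p powr \<epsilon>"
    using False \<epsilon>(1) by (intro powr_mono2) simp_all
  finally have "real (divisor_tau k (p ^ a)) \<le> real (p ^ a) powr \<epsilon>"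
    by (rule divisor_tau_prime_power_le_powr[OF p])
  moreover have "prime_weight (real k powr (1 / \<epsilon>)) p = 0"
    using False by (simp add: prime_weight_def)
  ultimately show ?thesis
    by (simp only: mult_0_right power_0 mult_1)
qed

lemma sum_prime_weight_le:
  assumes Y: "0 \<le> Y" and primes: "\<And>p. p \<in> P \<Longrightarrow> prime p"
  shows "real (\<Sum>p\<in>P. prime_weight Y p) \<le> Y"
proof (cases "finite P")
  case True
  define Q where "Q = {p \<in> P. real p < Y}"
  define M where "M = nat \<lfloor>Y\<rfloor>"
  have le_M: "p \<le> M" if "real p < Y" for p
  proof -
    have "int p \<le> \<lfloor>Y\<rfloor>"
      using that by (simp add: le_floor_iff)
    then show ?thesis
      using nat_mono by (force simp: M_def)
  qed
  have "Q \<subseteq> {2..M}"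
  proof
    fix p assume "p \<in> Q"
    then have "prime p" "real p < Y"
      by (simp_all add: Q_def primes)
    then show "p \<in> {2..M}"
      using prime_ge_2_nat le_M by (simp only: atLeastAtMost_iff)
  qed
  then have card_Q: "card Q \<le> M - 1"
    using card_mono[OF finite_atLeastAtMost, of Q 2 M] by simp
  have "finite Q"
    using True by (simp add: Q_def)
  have "(\<Sum>p\<in>P. prime_weight Y p) = (\<Sum>p\<in>Q. prime_weight Y p)"
    using True by (intro sum.mono_neutral_right) (auto simp: Q_def prime_weight_def)
  also have "\<dots> = (\<Sum>p\<in>Q. 1 + (if p = 2 then 1 else 0))"
    by (intro sum.cong) (auto simp: Q_def prime_weight_def)
  also have "\<dots> = card Q + (if 2 \<in> Q then 1 else 0)"
    using \<open>finite Q\<close> by (simp only: sum.distrib sum.delta) simp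
  also have "\<dots> \<le> M"
    using card_Q \<open>Q \<subseteq> {2..M}\<close> by (cases "Q = {}") (auto split: if_splits)
  finally have "real (\<Sum>p\<in>P. prime_weight Y p) \<le> real M"
    by linarith
  also have "\<dots> \<le> Y"
    using Y by (simp add: M_def)
  finally show ?thesis .
qed (simp add: Y)

lemma submultiplicative_prod_le:
  fixes f g :: "nat \<Rightarrow> nat"
  assumes f1: "f 1 \<le> 1" and f_mult: "\<And>a b. coprime a b \<Longrightarrow> f (a * b) \<le> f a * f b"
    and "finite P" and coprime: "\<And>p q. p \<in> P \<Longrightarrow> q \<in> P \<Longrightarrow> p \<noteq> q \<Longrightarrow> coprime (g p) (g q)"
  shows "f (\<Prod>p\<in>P. g p) \<le> (\<Prod>p\<in>P. f (g p))"
  using assms(3,4)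
proof (induction P rule: finite_induct)
  case (insert p P)
  have "coprime (g p) (\<Prod>q\<in>P. g q)"
    using insert by (intro prod_coprime_right) auto
  then have "f (\<Prod>q\<in>insert p P. g q) \<le> f (g p) * f (\<Prod>q\<in>P. g q)"
    using insert.hyps by (simp add: f_mult)
  also have "\<dots> \<le> f (g p) * (\<Prod>q\<in>P. f (g q))"
    using insert by (intro mult_left_mono) auto
  finally show ?case
    using insert.hyps by simp
qed (simp only: prod.empty f1)

lemma divisor_tau_le_prod_prime_factors:
  assumes "n > 0"
  shows "divisor_tau k n \<le> (\<Prod>p\<in>prime_factors n. divisor_tau k (p ^ multiplicity p n))"
proof -
  have "divisor_tau k (\<Prod>p\<in>prime_factors n. p ^ multiplicity p n)
          \<le> (\<Prod>p\<in>prime_factors n. divisor_tau k (p ^ multiplicity p n))"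
    by (rule submultiplicative_prod_le[OF eq_imp_le[OF divisor_tau_1] divisor_tau_coprime_mult_le])
      (auto intro: primes_coprime dest: in_prime_factors_imp_prime)
  then show ?thesis
    using prime_factorization_nat[OF assms] by simp
qed

lemma divisor_tau_le_prime_weight_powr:
  assumes \<epsilon>: "0 < \<epsilon>" "6 * \<epsilon> \<le> real k - 1" and n: "n > 0"
  shows "real (divisor_tau k n)
           \<le> (3 * (real k - 1) / (5 * \<epsilon>)) ^ ((k - 1) * (\<Sum>p\<in>prime_factors n. prime_weight (real k powr (1 / \<epsilon>)) p))
             * real n powr \<epsilon>"
proof -
  define B where "B = 3 * (real k - 1) / (5 * \<epsilon>)"
  define w where "w = prime_weight (real k powr (1 / \<epsilon>))"
  define e where "e p = p ^ multiplicity p n" for p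
  have "real (divisor_tau k n) \<le> (\<Prod>p\<in>prime_factors n. real (divisor_tau k (e p)))"
    using divisor_tau_le_prod_prime_factors[OF n, of k] unfolding e_def
    by (metis of_nat_le_iff of_nat_prod)
  also have "\<dots> \<le> (\<Prod>p\<in>prime_factors n. B ^ ((k - 1) * w p) * real (e p) powr \<epsilon>)"
    using divisor_tau_prime_power_le_prime_weight[OF _ \<epsilon>]
    by (intro prod_mono) (simp add: B_def w_def e_def in_prime_factors_iff)
  also have "\<dots> = B ^ ((k - 1) * (\<Sum>p\<in>prime_factors n. w p)) * real n powr \<epsilon>"
  proof -
    have "(\<Prod>p\<in>prime_factors n. real (e p) powr \<epsilon>) = real (\<Prod>p\<in>prime_factors n. e p) powr \<epsilon>"
      by (simp only: of_nat_prod prod_powr_distrib)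
    moreover have "(\<Prod>p\<in>prime_factors n. e p) = n"
      unfolding e_def using n by (rule prime_factorization_nat[symmetric])
    ultimately show ?thesis
      by (simp add: prod.distrib power_sum sum_distrib_left)
  qed
  finally show ?thesis
    by (simp only: B_def w_def)
qed

lemma divisor_tau_le_powr:
  assumes \<epsilon>: "0 < \<epsilon>" "6 * \<epsilon> \<le> real k - 1" and n: "n > 0"
  shows "real (divisor_tau k n)
           \<le> (3 * (real k - 1) / (5 * \<epsilon>)) powr (real k powr (1 / \<epsilon>) * (real k - 1)) * real n powr \<epsilon>"
proof -
  define B where "B = 3 * (real k - 1) / (5 * \<epsilon>)"
  define Y where "Y = real k powr (1 / \<epsilon>)"
  define W where "W = (\<Sum>p\<in>prime_factors n. prime_weight Y p)"
  have B: "1 \<le> B"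
    using \<epsilon> by (simp add: B_def field_simps)
  have "real W \<le> Y"
    unfolding W_def by (rule sum_prime_weight_le) (simp_all add: Y_def in_prime_factors_imp_prime)
  then have "real ((k - 1) * W) \<le> Y * (real k - 1)"
    using \<epsilon> by (simp add: of_nat_diff mult.commute mult_left_mono)
  then have "B powr real ((k - 1) * W) \<le> B powr (Y * (real k - 1))"
    using B by (rule powr_mono)
  then have "B ^ ((k - 1) * W) \<le> B powr (Y * (real k - 1))"
    using powr_realpow[of B "(k - 1) * W"] B by simp
  then have "B ^ ((k - 1) * W) * real n powr \<epsilon> \<le> B powr (Y * (real k - 1)) * real n powr \<epsilon>"
    by (rule mult_right_mono) simp
  then show ?thesis
    using divisor_tau_le_prime_weight_powr[OF \<epsilon> n] by (simp only: B_def Y_def W_def)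
qed

theorem lemma3:
  fixes k n :: nat and \<epsilon> :: real
  assumes "k \<ge> 2" and "n \<ge> 1" and "0 < \<epsilon>" and "\<epsilon> \<le> (real k - 1) / 6"
  shows "real (divisor_tau k n) \<le>
           min (real k ^ bigOmega n)
               ((3 * (real k - 1) / (5 * \<epsilon>)) powr (real k powr (1 / \<epsilon>) * (real k - 1)) * real n powr \<epsilon>)"
proof (rule min.boundedI)
  show "real (divisor_tau k n) \<le> real k ^ bigOmega n"
    using divisor_tau_le_power_bigOmega[of k n] by (metis of_nat_le_iff of_nat_power)
  show "real (divisor_tau k n)
          \<le> (3 * (real k - 1) / (5 * \<epsilon>)) powr (real k powr (1 / \<epsilon>) * (real k - 1)) * real n powr \<epsilon>"
    using assms by (intro divisor_tau_le_powr) simp_all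
qed

end
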